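(* Let $\mathcal{C}_0\subseteq\mathbb{F}_2^n$ be a code with $|\mathcal{C}_0|\ge 2$ and minimum distance $d$, let $t=\lfloor (d-1)/2\rfloor$, and let $\varepsilon>0$. Let $\rho$ be a pmf on $\mathbb{F}_2^n$ such that $d_{TV}(P_{\mathcal{C}_0}\ast\rho,P_{U_n})\le\varepsilon$. Then $$\sum_{x:|x|\le t}\rho(x)\le\frac{|\mathcal{C}_0|V_n(t)}{2^n}+\varepsilon\qquad\text{and}\qquad\sum_{x:|x|\ge n-t}\rho(x)\le\frac{|\mathcal{C}_0|V_n(t)}{2^n}+\varepsilon.$$
   Context: $|x|$ is the Hamming weight of $x\in\mathbb{F}_2^n$. $P_{\mathcal{C}_0}$ is the uniform pmf on $\mathcal{C}_0$, $P_{U_n}$ the uniform pmf on $\mathbb{F}_2^n$. Convolution: $(f\ast g)(x)=\sum_{y\in\mathbb{F}_2^n}f(y)g(x-y)$. $V_n(t)=\sum_{j=0}^t\binom nj$ is the size of a Hamming ball of radius $t$. The total variation distance is $d_{TV}(P,Q)=\max_{A}|P(A)-Q(A)|=\frac12\sum_x|P(x)-Q(x)|$. *)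

theory Defs
  imports Complex_Main
begin

text \<open>Vectors of F_2^n are represented as boolean lists of length n (True = 1).\<close>

definition F2n :: "nat \<Rightarrow> bool list set" where
  "F2n n = {x. length x = n}"

text \<open>Addition in F_2^n (componentwise XOR); in characteristic 2, x - y = x + y.\<close>
definition vadd :: "bool list \<Rightarrow> bool list \<Rightarrow> bool list" where
  "vadd x y = map2 (\<lambda>a b. a \<noteq> b) x y"

definition hw :: "bool list \<Rightarrow> nat" where
  "hw x = length (filter id x)"

definition hdist :: "bool list \<Rightarrow> bool list \<Rightarrow> nat" where
  "hdist x y = hw (vadd x y)"

definition min_dist :: "bool list set \<Rightarrow> nat" where
  "min_dist C = Min {hdist x y | x y. x \<in> C \<and> y \<in> C \<and> x \<noteq> y}"

definition ball_vol :: "nat \<Rightarrow> nat \<Rightarrow> nat" where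
  "ball_vol n t = (\<Sum>j\<le>t. n choose j)"

definition is_pmf :: "nat \<Rightarrow> (bool list \<Rightarrow> real) \<Rightarrow> bool" where
  "is_pmf n p \<longleftrightarrow> (\<forall>x\<in>F2n n. p x \<ge> 0) \<and> (\<Sum>x\<in>F2n n. p x) = 1"

definition unif_code :: "bool list set \<Rightarrow> bool list \<Rightarrow> real" where
  "unif_code C x = (if x \<in> C then 1 / real (card C) else 0)"

definition unif :: "nat \<Rightarrow> bool list \<Rightarrow> real" where
  "unif n x = 1 / 2 ^ n"

definition conv :: "nat \<Rightarrow> (bool list \<Rightarrow> real) \<Rightarrow> (bool list \<Rightarrow> real) \<Rightarrow> bool list \<Rightarrow> real" where
  "conv n f g x = (\<Sum>y\<in>F2n n. f y * g (vadd x y))"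

definition dTV :: "nat \<Rightarrow> (bool list \<Rightarrow> real) \<Rightarrow> (bool list \<Rightarrow> real) \<Rightarrow> real" where
  "dTV n P Q = (1/2) * (\<Sum>x\<in>F2n n. \<bar>P x - Q x\<bar>)"

end

theory Submission
  imports Defs
begin

text \<open>For every codeword c, translating E by c lands inside the sumset C + E, so
  \<rho>(E) \<le> \<rho>((C + E) + c); averaging over c gives \<rho>(E) \<le> (P_C \<ast> \<rho>)(C + E). The total variation
  bound then gives (P_C \<ast> \<rho>)(C + E) \<le> |C + E| / 2^n + \<epsilon> \<le> |C| |E| / 2^n + \<epsilon>. Both the Hamming
  ball of radius t and its complement-image {x. |x| \<ge> n - t} have at most V_n(t) elements.\<close>

lemma F2n_eq_lists: "F2n n = {xs. set xs \<subseteq> UNIV \<and> length xs = n}"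
  by (simp add: F2n_def)

lemma finite_F2n: "finite (F2n n)"
  unfolding F2n_eq_lists by (rule finite_lists_length_eq) simp

lemma card_F2n: "card (F2n n) = 2 ^ n"
  unfolding F2n_eq_lists by (subst card_lists_length_eq) auto

lemma length_vadd [simp]: "length (vadd x y) = min (length x) (length y)"
  by (simp add: vadd_def)

lemma vadd_in_F2n: "x \<in> F2n n \<Longrightarrow> y \<in> F2n n \<Longrightarrow> vadd x y \<in> F2n n"
  by (simp add: F2n_def)

lemma vadd_commute: "vadd x y = vadd y x"
proof (induction x arbitrary: y)
  case Nil
  then show ?case by (simp add: vadd_def)
next
  case (Cons a x)
  then show ?case by (cases y) (auto simp: vadd_def)
qed

lemma vadd_vadd_cancel: "length x = length c \<Longrightarrow> vadd (vadd x c) c = x"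
proof (induction x arbitrary: c)
  case Nil
  then show ?case by (simp add: vadd_def)
next
  case (Cons a x)
  then show ?case by (cases c) (auto simp: vadd_def)
qed

lemma bij_betw_vadd_F2n: "c \<in> F2n n \<Longrightarrow> bij_betw (\<lambda>x. vadd x c) (F2n n) (F2n n)"
  by (rule bij_betw_byWitness[where f' = "\<lambda>x. vadd x c"])
     (auto simp: F2n_def intro: vadd_vadd_cancel)

lemma sum_F2n_translate: "c \<in> F2n n \<Longrightarrow> (\<Sum>x\<in>F2n n. f (vadd x c)) = (\<Sum>x\<in>F2n n. f x)"
  using sum.reindex_bij_betw[OF bij_betw_vadd_F2n, of c n f] by simp

definition sumset :: "bool list set \<Rightarrow> bool list set \<Rightarrow> bool list set" where
  "sumset C E = (\<lambda>(c, e). vadd c e) ` (C \<times> E)"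

lemma sumset_subset_F2n: "C \<subseteq> F2n n \<Longrightarrow> E \<subseteq> F2n n \<Longrightarrow> sumset C E \<subseteq> F2n n"
  by (auto simp: sumset_def intro: vadd_in_F2n)

lemma card_sumset_le:
  assumes "finite C" "finite E"
  shows "card (sumset C E) \<le> card C * card E"
  unfolding sumset_def using card_image_le[of "C \<times> E"] assms by (simp add: card_cartesian_product)

lemma sum_le_sum_translate_sumset:
  fixes \<rho> :: "bool list \<Rightarrow> 'a::ordered_comm_monoid_add"
  assumes c: "c \<in> C" "C \<subseteq> F2n n" and E: "E \<subseteq> F2n n"
    and nonneg: "\<And>x. x \<in> F2n n \<Longrightarrow> \<rho> x \<ge> 0"
  shows "(\<Sum>x\<in>E. \<rho> x) \<le> (\<Sum>x\<in>sumset C E. \<rho> (vadd x c))"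
proof -
  have cancel: "vadd (vadd e c) c = e" if "e \<in> E" for e
  proof (rule vadd_vadd_cancel)
    show "length e = length c" using that c E by (auto simp: F2n_def)
  qed
  have "inj_on (\<lambda>e. vadd e c) E"
    by (rule inj_on_inverseI[where g = "\<lambda>x. vadd x c"]) (rule cancel)
  then have "(\<Sum>x\<in>(\<lambda>e. vadd e c) ` E. \<rho> (vadd x c)) = (\<Sum>e\<in>E. \<rho> (vadd (vadd e c) c))"
    by (rule sum.reindex[unfolded comp_def])
  then have "(\<Sum>x\<in>E. \<rho> x) = (\<Sum>x\<in>(\<lambda>e. vadd e c) ` E. \<rho> (vadd x c))"
    by (simp add: cancel)
  also have "\<dots> \<le> (\<Sum>x\<in>sumset C E. \<rho> (vadd x c))"
  proof (rule sum_mono2)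
    have "sumset C E \<subseteq> F2n n" using c(2) E by (rule sumset_subset_F2n)
    then show "finite (sumset C E)" using finite_F2n by (rule finite_subset)
    have "vadd e c \<in> sumset C E" if "e \<in> E" for e
      unfolding sumset_def vadd_commute[of e c] using c(1) that by blast
    then show "(\<lambda>e. vadd e c) ` E \<subseteq> sumset C E" by blast
    show "0 \<le> \<rho> (vadd x c)" if "x \<in> sumset C E - (\<lambda>e. vadd e c) ` E" for x
      using that \<open>sumset C E \<subseteq> F2n n\<close> c by (intro nonneg vadd_in_F2n) auto
  qed
  finally show ?thesis .
qed

lemma conv_unif_code:
  assumes "C \<subseteq> F2n n"
  shows "conv n (unif_code C) \<rho> x = (\<Sum>c\<in>C. \<rho> (vadd x c)) / real (card C)"
proof -
  have "conv n (unif_code C) \<rho> x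
      = (\<Sum>y\<in>F2n n. if y \<in> C then \<rho> (vadd x y) / real (card C) else 0)"
    unfolding conv_def unif_code_def by (rule sum.cong) auto
  also have "\<dots> = (\<Sum>y\<in>C. \<rho> (vadd x y) / real (card C))"
    using assms finite_F2n by (simp add: sum.If_cases Int_absorb1)
  finally show ?thesis by (simp add: sum_divide_distrib)
qed

lemma sum_conv_unif_code:
  assumes "C \<subseteq> F2n n" "C \<noteq> {}"
  shows "(\<Sum>x\<in>F2n n. conv n (unif_code C) \<rho> x) = (\<Sum>x\<in>F2n n. \<rho> x)"
proof -
  have "finite C" using assms(1) finite_F2n finite_subset by blast
  have "(\<Sum>x\<in>F2n n. conv n (unif_code C) \<rho> x) = (\<Sum>c\<in>C. \<Sum>x\<in>F2n n. \<rho> (vadd x c)) / real (card C)"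
    using assms(1) by (simp add: conv_unif_code sum_divide_distrib[symmetric] sum.swap[of _ "F2n n" C])
  also have "\<dots> = (\<Sum>c\<in>C. \<Sum>x\<in>F2n n. \<rho> x) / real (card C)"
    using assms(1) by (simp add: sum_F2n_translate subsetD)
  finally show ?thesis
    using \<open>finite C\<close> assms(2) by simp
qed

lemma sum_le_sum_conv_unif_code_sumset:
  assumes C: "C \<subseteq> F2n n" "C \<noteq> {}" and E: "E \<subseteq> F2n n"
    and nonneg: "\<And>x. x \<in> F2n n \<Longrightarrow> \<rho> x \<ge> 0"
  shows "(\<Sum>x\<in>E. \<rho> x) \<le> (\<Sum>x\<in>sumset C E. conv n (unif_code C) \<rho> x)"
proof -
  have "finite C" using C(1) finite_F2n finite_subset by blast
  then have card_pos: "real (card C) > 0" using C(2) by (simp add: card_gt_0_iff)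
  have "real (card C) * (\<Sum>x\<in>E. \<rho> x) = (\<Sum>c\<in>C. \<Sum>x\<in>E. \<rho> x)" by simp
  also have "\<dots> \<le> (\<Sum>c\<in>C. \<Sum>x\<in>sumset C E. \<rho> (vadd x c))"
    using C E nonneg by (intro sum_mono sum_le_sum_translate_sumset)
  also have "\<dots> = real (card C) * (\<Sum>x\<in>sumset C E. conv n (unif_code C) \<rho> x)"
    using sumset_subset_F2n[OF C(1) E] C(1) card_pos
    by (simp add: conv_unif_code subsetD sum_divide_distrib[symmetric] sum.swap[of _ "sumset C E" C])
  finally show ?thesis using card_pos by simp
qed

lemma sum_diff_le_dTV:
  assumes A: "A \<subseteq> F2n n" and mass: "(\<Sum>x\<in>F2n n. P x) = (\<Sum>x\<in>F2n n. Q x)"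
  shows "(\<Sum>x\<in>A. P x) - (\<Sum>x\<in>A. Q x) \<le> dTV n P Q"
proof -
  define D where "D x = P x - Q x" for x
  have split: "(\<Sum>x\<in>F2n n. f x) = (\<Sum>x\<in>A. f x) + (\<Sum>x\<in>F2n n - A. f x)" for f :: "_ \<Rightarrow> real"
    using A finite_F2n by (metis add.commute sum.subset_diff)
  have "(\<Sum>x\<in>F2n n. D x) = 0"
    using mass by (simp add: D_def sum_subtractf)
  moreover have "(\<Sum>x\<in>A. D x) \<le> (\<Sum>x\<in>A. \<bar>D x\<bar>)" by (rule sum_mono) simp
  moreover have "- (\<Sum>x\<in>F2n n - A. D x) \<le> (\<Sum>x\<in>F2n n - A. \<bar>D x\<bar>)"
    by (simp add: sum_negf[symmetric] sum_mono)
  ultimately have "2 * (\<Sum>x\<in>A. D x) \<le> (\<Sum>x\<in>F2n n. \<bar>D x\<bar>)"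
    using split[of D] split[of "\<lambda>x. \<bar>D x\<bar>"] by linarith
  then show ?thesis by (simp add: dTV_def D_def sum_subtractf)
qed

lemma sum_le_card_times_card_plus_dTV:
  assumes C: "C \<subseteq> F2n n" "C \<noteq> {}" and E: "E \<subseteq> F2n n" and \<rho>: "is_pmf n \<rho>"
  shows "(\<Sum>x\<in>E. \<rho> x)
    \<le> real (card C) * real (card E) / 2 ^ n + dTV n (conv n (unif_code C) \<rho>) (unif n)"
proof -
  define P where "P = conv n (unif_code C) \<rho>"
  define A where "A = sumset C E"
  have A_F2n: "A \<subseteq> F2n n" using sumset_subset_F2n[OF C(1) E] by (simp add: A_def)
  have card_A: "real (card A) \<le> real (card C) * real (card E)"
    using card_sumset_le[of C E] C(1) E finite_F2n finite_subset
    by (metis A_def of_nat_mono of_nat_mult)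
  have "(\<Sum>x\<in>E. \<rho> x) \<le> (\<Sum>x\<in>A. P x)"
    using sum_le_sum_conv_unif_code_sumset[OF C E] \<rho> by (simp add: is_pmf_def A_def P_def)
  also have "\<dots> \<le> (\<Sum>x\<in>A. unif n x) + dTV n P (unif n)"
  proof -
    have "(\<Sum>x\<in>F2n n. P x) = (\<Sum>x\<in>F2n n. unif n x)"
      using sum_conv_unif_code[OF C] \<rho> by (simp add: P_def is_pmf_def unif_def card_F2n)
    then show ?thesis
      using sum_diff_le_dTV[OF A_F2n] by (simp add: algebra_simps)
  qed
  also have "(\<Sum>x\<in>A. unif n x) = real (card A) / 2 ^ n"
    by (simp add: unif_def)
  also have "\<dots> \<le> real (card C) * real (card E) / 2 ^ n"
    using card_A by (simp add: divide_right_mono)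
  finally show ?thesis by (simp add: P_def)
qed

lemma card_hw_le_ball_vol: "card {x\<in>F2n n. hw x \<le> t} \<le> ball_vol n t"
proof -
  define supp where "supp x = {i. i < n \<and> x ! i}" for x :: "bool list"
  have "inj_on supp (F2n n)"
    by (rule inj_onI, rule nth_equalityI) (auto simp: F2n_def supp_def set_eq_iff)
  have hw_supp: "hw x = card (supp x)" if "x \<in> F2n n" for x
    using that by (simp add: hw_def supp_def length_filter_conv_card F2n_def)
  have "card {x\<in>F2n n. hw x \<le> t} = card (supp ` {x\<in>F2n n. hw x \<le> t})"
    by (intro card_image[symmetric] inj_on_subset[OF \<open>inj_on supp (F2n n)\<close>]) auto
  also have "\<dots> \<le> card (\<Union>j\<le>t. {B. B \<subseteq> {0..<n} \<and> card B = j})"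
    by (rule card_mono) (auto simp: supp_def hw_supp)
  also have "\<dots> \<le> (\<Sum>j\<le>t. card {B. B \<subseteq> {0..<n} \<and> card B = j})"
    by (rule card_UN_le) simp
  also have "\<dots> = ball_vol n t"
    by (simp add: ball_vol_def n_subsets)
  finally show ?thesis .
qed

lemma hw_map_Not: "hw (map Not x) = length x - hw x"
  using sum_length_filter_compl[of id x] by (simp add: hw_def comp_def)

lemma card_hw_ge_le_card_hw_le:
  "card {x\<in>F2n n. hw x \<ge> n - t} \<le> card {x\<in>F2n n. hw x \<le> t}"
proof -
  have "{x\<in>F2n n. hw x \<ge> n - t} \<subseteq> map Not ` {x\<in>F2n n. hw x \<le> t}"
  proof
    fix x
    assume x: "x \<in> {x\<in>F2n n. hw x \<ge> n - t}"
    have "hw x \<le> length x" by (simp add: hw_def)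
    then have "map Not x \<in> {x\<in>F2n n. hw x \<le> t}"
      using x by (auto simp: F2n_def hw_map_Not)
    moreover have "x = map Not (map Not x)" by (simp add: comp_def)
    ultimately show "x \<in> map Not ` {x\<in>F2n n. hw x \<le> t}" by blast
  qed
  then have "card {x\<in>F2n n. hw x \<ge> n - t} \<le> card (map Not ` {x\<in>F2n n. hw x \<le> t})"
    using finite_F2n by (intro card_mono) auto
  also have "\<dots> \<le> card {x\<in>F2n n. hw x \<le> t}"
    using finite_F2n by (intro card_image_le) simp
  finally show ?thesis .
qed

theorem mainTheorem2:
  fixes n :: nat and C0 :: "bool list set" and d t :: nat and \<epsilon> :: real
    and \<rho> :: "bool list \<Rightarrow> real"
  assumes "C0 \<subseteq> F2n n" and "card C0 \<ge> 2"
    and "d = min_dist C0" and "t = (d - 1) div 2" and "\<epsilon> > 0"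
    and "is_pmf n \<rho>"
    and "dTV n (conv n (unif_code C0) \<rho>) (unif n) \<le> \<epsilon>"
  shows "(\<Sum>x\<in>{x\<in>F2n n. hw x \<le> t}. \<rho> x) \<le> real (card C0) * real (ball_vol n t) / 2 ^ n + \<epsilon>
    \<and> (\<Sum>x\<in>{x\<in>F2n n. hw x \<ge> n - t}. \<rho> x) \<le> real (card C0) * real (ball_vol n t) / 2 ^ n + \<epsilon>"
proof -
  have "C0 \<noteq> {}" using assms(2) by auto
  have bound: "(\<Sum>x\<in>E. \<rho> x) \<le> real (card C0) * real (ball_vol n t) / 2 ^ n + \<epsilon>"
    if "E \<subseteq> F2n n" "card E \<le> ball_vol n t" for E
  proof -
    have "real (card C0) * real (card E) / 2 ^ n \<le> real (card C0) * real (ball_vol n t) / 2 ^ n"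
      using that(2) by (intro divide_right_mono mult_left_mono) auto
    then show ?thesis
      using sum_le_card_times_card_plus_dTV[OF assms(1) \<open>C0 \<noteq> {}\<close> that(1) assms(6)] assms(7)
      by linarith
  qed
  show ?thesis
    using bound card_hw_le_ball_vol le_trans[OF card_hw_ge_le_card_hw_le card_hw_le_ball_vol]
    by auto
qed

end
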